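(* Let $X$ be a $T_1$ space. For open $U,V\subseteq X$ let $\mathrm{Homeo}^l_X(U,V)$ be the set of local homeomorphisms $U\to V$; with composition of maps and the inclusion maps $U\hookrightarrow V$ for $U\subseteq V$, this is a small category containing $X_{top}$ as a subcategory. Then $\mathrm{Homeo}^l_X$ is a pseudogroup sheaf on $X$.
   Context: $X_{top}$ denotes the set of open subsets of $X$, regarded as a category with exactly one morphism $U\to V$ iff $U\subseteq V$. Let $\mathcal C$ be a small category with $\mathrm{Ob}(\mathcal C)=X_{top}$ containing $X_{top}$ as a subcategory (identity on objects). For each open $V$, $\mathcal C(-,V)$ is a presheaf of sets on $X$ (restriction along $U'\subseteq U$ = precomposition with the inclusion morphism). For $x\in X$ let $\mathcal C_x(V)=\operatorname{colim}_{U\ni x}\mathcal C(U,V)$ (germ of $f\in\mathcal C(U,V)$ at $x$ written $f_x$); postcomposition with inclusions makes this functorial in $V$, and for $y\in X$ let $\mathcal C_x^y=\lim_{V\ni y}\mathcal C_x(V)$ (limit over open neighbourhoods of $y$), with projections $\mathcal C_x^y\to\mathcal C_x(V)$. Composition in $\mathcal C$ induces $\mathcal C_y^z\times\mathcal C_x^y\to\mathcal C_x^z$: given $\varphi\in\mathcal C_x^y,\psi\in\mathcal C_y^z$ and open $W\ni z$, choose $g\in\mathcal C(V,W)$, $y\in V$, representing the component $\psi_W$, and $f\in\mathcal C(U,V)$ representing $\varphi_V$; the $W$-component of $\psi\circ\varphi$ is $(g\circ f)_x$. This defines a category $\mathcal C^\star$ with objects the points of $X$ and $\mathcal C^\star(x,y)=\mathcal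 C_x^y$. For $X$ a $T_1$ space, a pre-pseudogroup on $X$ is such a $\mathcal C$ satisfying: (1) $\mathrm{Ob}(\mathcal C)=\mathrm{Ob}(X_{top})$; (2) for every open $V$ and $x\in X$, the map $\coprod_{y\in V}\mathcal C_x^y\to\mathcal C_x(V)$ induced by the projections is a bijection; (3) $\mathcal C^\star$ is a groupoid. A pseudogroup sheaf on $X$ is a pre-pseudogroup such that moreover (4) each presheaf $\mathcal C(-,V)$ is a sheaf. *)

theory Defs
  imports "HOL-Analysis.Analysis"
begin

text \<open>A "small category with objects the open sets of X, containing X_top as a
subcategory" is represented by: hom-sets indexed by pairs of sets, composition
cmp U V W g f (for f : U -> V, g : V -> W), and the inclusion morphisms incl U V.\<close>

record ('a, 'm) opcat =
  hom  :: "'a set \<Rightarrow> 'a set \<Rightarrow> 'm set"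
  cmp  :: "'a set \<Rightarrow> 'a set \<Rightarrow> 'a set \<Rightarrow> 'm \<Rightarrow> 'm \<Rightarrow> 'm"
  incl :: "'a set \<Rightarrow> 'a set \<Rightarrow> 'm"

definition cat_over :: "'a topology \<Rightarrow> ('a, 'm) opcat \<Rightarrow> bool" where
  "cat_over X C \<longleftrightarrow>
     (\<forall>U V f. f \<in> hom C U V \<longrightarrow> openin X U \<and> openin X V) \<and>
     (\<forall>U V W f g. f \<in> hom C U V \<longrightarrow> g \<in> hom C V W \<longrightarrow> cmp C U V W g f \<in> hom C U W) \<and>
     (\<forall>U V W Z f g h. f \<in> hom C U V \<longrightarrow> g \<in> hom C V W \<longrightarrow> h \<in> hom C W Z \<longrightarrow>
        cmp C U W Z h (cmp C U V W g f) = cmp C U V Z (cmp C V W Z h g) f) \<and>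
     (\<forall>U V f. f \<in> hom C U V \<longrightarrow>
        cmp C U U V f (incl C U U) = f \<and> cmp C U V V (incl C V V) f = f) \<and>
     (\<forall>U V. openin X U \<and> openin X V \<and> U \<subseteq> V \<longrightarrow> incl C U V \<in> hom C U V) \<and>
     (\<forall>U V W. openin X U \<and> openin X V \<and> openin X W \<and> U \<subseteq> V \<and> V \<subseteq> W \<longrightarrow>
        cmp C U V W (incl C V W) (incl C U V) = incl C U W)"

definition germ_dom :: "'a topology \<Rightarrow> ('a, 'm) opcat \<Rightarrow> 'a \<Rightarrow> 'a set \<Rightarrow> ('a set \<times> 'm) set" where
  "germ_dom X C x V = {(U, f). openin X U \<and> x \<in> U \<and> f \<in> hom C U V}"

definition germ_rel :: "'a topology \<Rightarrow> ('a, 'm) opcat \<Rightarrow> 'a \<Rightarrow> 'a set \<Rightarrow> (('a set \<times> 'm) \<times> ('a set \<times> 'm)) set" where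
  "germ_rel X C x V = {((U, f), (U', f')).
      (U, f) \<in> germ_dom X C x V \<and> (U', f') \<in> germ_dom X C x V \<and>
      (\<exists>W. openin X W \<and> x \<in> W \<and> W \<subseteq> U \<inter> U' \<and>
           cmp C W U V f (incl C W U) = cmp C W U' V f' (incl C W U'))}"

text \<open>C_x(V) = colim_{U ni x} C(U,V), as the set of equivalence classes.\<close>
definition stalk :: "'a topology \<Rightarrow> ('a, 'm) opcat \<Rightarrow> 'a \<Rightarrow> 'a set \<Rightarrow> ('a set \<times> 'm) set set" where
  "stalk X C x V = germ_dom X C x V // germ_rel X C x V"

definition germ :: "'a topology \<Rightarrow> ('a, 'm) opcat \<Rightarrow> 'a \<Rightarrow> 'a set \<Rightarrow> 'a set \<Rightarrow> 'm \<Rightarrow> ('a set \<times> 'm) set" where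
  "germ X C x V U f = germ_rel X C x V `` {(U, f)}"

definition nbhds :: "'a topology \<Rightarrow> 'a \<Rightarrow> 'a set set" where
  "nbhds X y = {V. openin X V \<and> y \<in> V}"

text \<open>C_x^y = lim_{V ni y} C_x(V): compatible families (extensional on the open
neighbourhoods of y); the transition map C_x(V) -> C_x(V') for V \<subseteq> V' is
postcomposition with the inclusion.\<close>
definition Cxy :: "'a topology \<Rightarrow> ('a, 'm) opcat \<Rightarrow> 'a \<Rightarrow> 'a \<Rightarrow> ('a set \<Rightarrow> ('a set \<times> 'm) set) set" where
  "Cxy X C x y = {\<phi>. \<phi> \<in> (\<Pi>\<^sub>E V\<in>nbhds X y. stalk X C x V) \<and>
      (\<forall>V V'. V \<in> nbhds X y \<and> V' \<in> nbhds X y \<and> V \<subseteq> V' \<longrightarrow>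
         (\<forall>(U, f) \<in> \<phi> V. germ X C x V' U (cmp C U V V' (incl C V V') f) = \<phi> V'))}"

definition star_id :: "'a topology \<Rightarrow> ('a, 'm) opcat \<Rightarrow> 'a \<Rightarrow> 'a set \<Rightarrow> ('a set \<times> 'm) set" where
  "star_id X C x = (\<lambda>V\<in>nbhds X x. germ X C x V V (incl C V V))"

definition star_comp :: "'a topology \<Rightarrow> ('a, 'm) opcat \<Rightarrow> 'a \<Rightarrow> 'a \<Rightarrow> 'a \<Rightarrow>
    ('a set \<Rightarrow> ('a set \<times> 'm) set) \<Rightarrow> ('a set \<Rightarrow> ('a set \<times> 'm) set) \<Rightarrow> 'a set \<Rightarrow> ('a set \<times> 'm) set" where
  "star_comp X C x y z \<psi> \<phi> = (\<lambda>W\<in>nbhds X z. SOME c. \<exists>V g U f.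
      V \<in> nbhds X y \<and> (V, g) \<in> \<psi> W \<and> (U, f) \<in> \<phi> V \<and> c = germ X C x W U (cmp C U V W g f))"

definition pre_pseudogroup :: "'a topology \<Rightarrow> ('a, 'm) opcat \<Rightarrow> bool" where
  "pre_pseudogroup X C \<longleftrightarrow>
     t1_space X \<and> cat_over X C \<and>
     (\<forall>V x. openin X V \<and> x \<in> topspace X \<longrightarrow>
        bij_betw (\<lambda>(y, \<phi>). \<phi> V) (SIGMA y:V. Cxy X C x y) (stalk X C x V)) \<and>
     (\<forall>x\<in>topspace X. \<forall>y\<in>topspace X. \<forall>\<phi>\<in>Cxy X C x y. \<exists>\<psi>\<in>Cxy X C y x.
        star_comp X C x y x \<psi> \<phi> = star_id X C x \<and> star_comp X C y x y \<phi> \<psi> = star_id X C y)"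

text \<open>Each presheaf C(-,V) (restriction = precomposition with inclusions) is a sheaf.\<close>
definition hom_sheaves :: "'a topology \<Rightarrow> ('a, 'm) opcat \<Rightarrow> bool" where
  "hom_sheaves X C \<longleftrightarrow>
     (\<forall>V U \<U> s. openin X V \<and> openin X U \<and> (\<forall>W\<in>\<U>. openin X W) \<and> \<Union>\<U> = U \<and>
        (\<forall>W\<in>\<U>. s W \<in> hom C W V) \<and>
        (\<forall>W\<in>\<U>. \<forall>W'\<in>\<U>. cmp C (W \<inter> W') W V (s W) (incl C (W \<inter> W') W) =
                         cmp C (W \<inter> W') W' V (s W') (incl C (W \<inter> W') W'))
      \<longrightarrow> (\<exists>!f. f \<in> hom C U V \<and> (\<forall>W\<in>\<U>. cmp C W U V f (incl C W U) = s W)))"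

definition pseudogroup_sheaf :: "'a topology \<Rightarrow> ('a, 'm) opcat \<Rightarrow> bool" where
  "pseudogroup_sheaf X C \<longleftrightarrow> pre_pseudogroup X C \<and> hom_sheaves X C"

definition local_homeo :: "'a topology \<Rightarrow> 'a set \<Rightarrow> 'a set \<Rightarrow> ('a \<Rightarrow> 'a) \<Rightarrow> bool" where
  "local_homeo X U V f \<longleftrightarrow> f ` U \<subseteq> V \<and>
     (\<forall>x\<in>U. \<exists>W. openin X W \<and> x \<in> W \<and> W \<subseteq> U \<and> openin (subtopology X V) (f ` W) \<and>
        homeomorphic_map (subtopology X W) (subtopology X (f ` W)) f)"

definition homeo_l :: "'a topology \<Rightarrow> ('a, 'a \<Rightarrow> 'a) opcat" where
  "homeo_l X = \<lparr> hom = (\<lambda>U V. {f. openin X U \<and> openin X V \<and> f \<in> extensional U \<and> local_homeo X U V f}),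
                cmp = (\<lambda>U V W g f. compose U g f),
                incl = (\<lambda>U V. restrict id U) \<rparr>"

end

theory Submission
  imports Defs
begin

text \<open>
  For local homeomorphisms two representatives define the same germ at \<open>x\<close> exactly when they
  agree as maps near \<open>x\<close>. An element of \<open>C\<^sub>x\<^sup>y\<close> is then determined by any single component:
  if \<open>(U, f)\<close> represents one of them, every component is the germ of \<open>f\<close>, so \<open>f x\<close> lies in
  every open neighbourhood of \<open>y\<close> and the \<open>T\<^sub>1\<close> axiom forces \<open>f x = y\<close>. Thus \<open>C\<^sub>x\<^sup>y\<close> is the
  set of germs at \<open>x\<close> of local homeomorphisms sending \<open>x\<close> to \<open>y\<close>, which yields the bijection
  with the stalk; composition in \<open>C\<^sup>\<star>\<close> is composition of germs, and local inverses give
  inverse germs. The sheaf condition holds because being a local homeomorphism is a local property,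
  so compatible local homeomorphisms glue.
\<close>

definition homeo_onto_open :: "'a topology \<Rightarrow> ('a \<Rightarrow> 'a) \<Rightarrow> 'a set \<Rightarrow> bool" where
  "homeo_onto_open X f W \<longleftrightarrow> openin X W \<and> openin X (f ` W) \<and>
      homeomorphic_map (subtopology X W) (subtopology X (f ` W)) f"

lemma local_homeo_iff_homeo_onto_open:
  assumes "openin X V"
  shows "local_homeo X U V f \<longleftrightarrow>
    f ` U \<subseteq> V \<and> (\<forall>x\<in>U. \<exists>W. x \<in> W \<and> W \<subseteq> U \<and> homeo_onto_open X f W)"
proof -
  have "openin (subtopology X V) (f ` W) \<longleftrightarrow> openin X (f ` W)" if "f ` W \<subseteq> V" for W
    using openin_open_subtopology[OF assms] that by blast
  then show ?thesis
    unfolding local_homeo_def homeo_onto_open_def by (meson image_mono order_trans)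
qed

lemma homeo_onto_open_subset:
  assumes f: "homeo_onto_open X f W" and "S \<subseteq> W" "openin X S"
  shows "homeo_onto_open X f S"
proof -
  have W: "openin X W" and fW: "openin X (f ` W)"
    and h: "homeomorphic_map (subtopology X W) (subtopology X (f ` W)) f"
    using f by (auto simp: homeo_onto_open_def)
  have "openin (subtopology X W) S"
    using assms openin_open_subtopology[OF W] by auto
  then have "openin (subtopology X (f ` W)) (f ` S)"
    using homeomorphic_imp_open_map[OF h] by (simp add: open_map_def)
  then have fS: "openin X (f ` S)"
    using openin_trans_full fW by blast
  have "homeomorphic_map
      (subtopology (subtopology X W) S) (subtopology (subtopology X (f ` W)) (f ` S)) f"
    by (rule homeomorphic_map_subtopologies[OF h])
       (use assms(2) in \<open>simp only: topspace_subtopology_subset[OF openin_subset, OF W] topspace_subtopology_subset[OF openin_subset, OF fW], blast\<close>)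
  then show ?thesis
    using fS assms(2,3) by (simp add: homeo_onto_open_def subtopology_subtopology Int_absorb1 image_mono)
qed

lemma homeo_onto_open_preimage:
  assumes f: "homeo_onto_open X f W" and "openin X T"
  shows "openin X {z \<in> W. f z \<in> T}"
proof -
  have W: "openin X W"
    and h: "homeomorphic_map (subtopology X W) (subtopology X (f ` W)) f"
    using f by (auto simp: homeo_onto_open_def)
  have "continuous_map (subtopology X W) X f"
    using homeomorphic_imp_continuous_map[OF h] continuous_map_in_subtopology by blast
  then have "openin (subtopology X W) {z \<in> W. f z \<in> T}"
    using openin_continuous_map_preimage[OF _ assms(2)] topspace_subtopology_subset[OF openin_subset[OF W]]
    by fastforce
  then show ?thesis
    using openin_trans_full W by blast
qed

lemma homeo_onto_open_cong:
  assumes "homeo_onto_open X f W" "\<And>z. z \<in> W \<Longrightarrow> f z = g z"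
  shows "homeo_onto_open X g W"
proof -
  have "g ` W = f ` W" and W: "openin X W"
    using assms by (auto simp: homeo_onto_open_def)
  moreover have "homeomorphic_map (subtopology X W) (subtopology X (f ` W)) g"
    using homeomorphic_map_eq[of "subtopology X W" "subtopology X (f ` W)" f g] assms
    unfolding homeo_onto_open_def topspace_subtopology_subset[OF openin_subset[OF W]] by blast
  ultimately show ?thesis
    using assms(1) by (simp add: homeo_onto_open_def)
qed

lemma homeo_onto_open_compose:
  assumes "homeo_onto_open X f W" "homeo_onto_open X g (f ` W)"
  shows "homeo_onto_open X (g \<circ> f) W"
  using assms homeomorphic_map_compose unfolding homeo_onto_open_def by (fastforce simp: image_comp)

lemma homeo_onto_open_id: "openin X W \<Longrightarrow> homeo_onto_open X id W"
  by (simp add: homeo_onto_open_def)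

lemma homeo_onto_open_inverse:
  assumes f: "homeo_onto_open X f W"
  obtains g where "homeo_onto_open X g (f ` W)" "g ` f ` W = W"
    "\<And>z. z \<in> W \<Longrightarrow> g (f z) = z" "\<And>w. w \<in> f ` W \<Longrightarrow> f (g w) = w"
proof -
  have W: "openin X W" and fW: "openin X (f ` W)"
    and h: "homeomorphic_map (subtopology X W) (subtopology X (f ` W)) f"
    using f by (auto simp: homeo_onto_open_def)
  obtain g where "homeomorphic_maps (subtopology X W) (subtopology X (f ` W)) f g"
    using h homeomorphic_map_maps by blast
  then have hg: "homeomorphic_map (subtopology X (f ` W)) (subtopology X W) g"
    and gf: "\<And>z. z \<in> W \<Longrightarrow> g (f z) = z" and fg: "\<And>w. w \<in> f ` W \<Longrightarrow> f (g w) = w"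
    unfolding homeomorphic_maps_map
      topspace_subtopology_subset[OF openin_subset, OF W] topspace_subtopology_subset[OF openin_subset, OF fW]
    by auto
  have "g ` f ` W = W"
    using gf by (force simp: image_comp)
  with hg W fW have "homeo_onto_open X g (f ` W)"
    by (simp add: homeo_onto_open_def)
  with \<open>g ` f ` W = W\<close> gf fg show ?thesis
    using that by blast
qed

lemma homeo_l_hom_iff:
  "f \<in> hom (homeo_l X) U V \<longleftrightarrow> openin X U \<and> openin X V \<and> f \<in> extensional U \<and> local_homeo X U V f"
  by (simp add: homeo_l_def)

lemma homeo_l_cmp [simp]: "cmp (homeo_l X) U V W g f = compose U g f"
  by (simp add: homeo_l_def)

lemma homeo_l_incl [simp]: "incl (homeo_l X) U V = restrict id U"
  by (simp add: homeo_l_def)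

lemma compose_restrict_id: "compose W f (restrict id W) = restrict f W"
  by (auto simp: compose_def fun_eq_iff)

lemma homeo_l_homE:
  assumes "f \<in> hom (homeo_l X) U V" "x \<in> U"
  obtains W where "x \<in> W" "W \<subseteq> U" "homeo_onto_open X f W"
  using assms local_homeo_iff_homeo_onto_open unfolding homeo_l_hom_iff by metis

lemma homeo_l_hom_image: "f \<in> hom (homeo_l X) U V \<Longrightarrow> f ` U \<subseteq> V"
  unfolding homeo_l_hom_iff local_homeo_def by blast

lemma homeo_l_hom_glue:
  assumes U: "openin X U" and V: "openin X V" and f: "f \<in> extensional U" and cover: "\<Union>\<U> = U"
    and pieces: "\<And>W. W \<in> \<U> \<Longrightarrow> restrict f W \<in> hom (homeo_l X) W V"
  shows "f \<in> hom (homeo_l X) U V"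
proof -
  have "local_homeo X U V f"
    unfolding local_homeo_iff_homeo_onto_open[OF V]
  proof (intro conjI ballI)
    show "f ` U \<subseteq> V"
      using homeo_l_hom_image[OF pieces] cover by fastforce
    fix x assume "x \<in> U"
    then obtain W where W: "W \<in> \<U>" "x \<in> W"
      using cover by blast
    then obtain S where "x \<in> S" "S \<subseteq> W" "homeo_onto_open X (restrict f W) S"
      using homeo_l_homE[OF pieces] by metis
    moreover have "homeo_onto_open X f S"
      by (rule homeo_onto_open_cong[OF \<open>homeo_onto_open X (restrict f W) S\<close>])
         (use \<open>S \<subseteq> W\<close> in auto)
    ultimately show "\<exists>S. x \<in> S \<and> S \<subseteq> U \<and> homeo_onto_open X f S"
      using W cover by blast
  qed
  with U V f show ?thesis
    by (simp add: homeo_l_hom_iff)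
qed

lemma homeo_l_hom_restrict:
  assumes f: "f \<in> hom (homeo_l X) U V" and "openin X U'" "U' \<subseteq> U" "openin X V'" "f ` U' \<subseteq> V'"
  shows "restrict f U' \<in> hom (homeo_l X) U' V'"
proof -
  have "local_homeo X U' V' (restrict f U')"
    unfolding local_homeo_iff_homeo_onto_open[OF \<open>openin X V'\<close>]
  proof (intro conjI ballI)
    show "restrict f U' ` U' \<subseteq> V'"
      using assms(5) by auto
    fix x assume "x \<in> U'"
    then obtain W where W: "x \<in> W" "W \<subseteq> U" "homeo_onto_open X f W"
      using homeo_l_homE[OF f] assms(3) by blast
    then have "openin X (W \<inter> U')"
      using assms(2) by (auto simp: homeo_onto_open_def)
    then have "homeo_onto_open X f (W \<inter> U')"
      using homeo_onto_open_subset[OF W(3)] by blast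
    then have "homeo_onto_open X (restrict f U') (W \<inter> U')"
      by (rule homeo_onto_open_cong) auto
    then show "\<exists>W. x \<in> W \<and> W \<subseteq> U' \<and> homeo_onto_open X (restrict f U') W"
      using W(1) \<open>x \<in> U'\<close> by blast
  qed
  with assms show ?thesis
    by (simp add: homeo_l_hom_iff)
qed

lemma homeo_l_hom_enlarge:
  assumes f: "f \<in> hom (homeo_l X) U V" and "V \<subseteq> V'" "openin X V'"
  shows "f \<in> hom (homeo_l X) U V'"
proof -
  have "restrict f U \<in> hom (homeo_l X) U V'"
    using homeo_l_hom_restrict[OF f] homeo_l_hom_image[OF f] f assms(2,3)
    unfolding homeo_l_hom_iff by blast
  moreover have "restrict f U = f"
    using f by (simp add: homeo_l_hom_iff extensional_restrict)
  ultimately show ?thesis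
    by simp
qed

lemma homeo_l_hom_continuous:
  assumes f: "f \<in> hom (homeo_l X) U V" and "x \<in> U" "openin X T" "f x \<in> T"
  obtains D where "openin X D" "x \<in> D" "D \<subseteq> U" "f ` D \<subseteq> T"
proof -
  obtain W where "x \<in> W" "W \<subseteq> U" "homeo_onto_open X f W"
    using homeo_l_homE[OF f \<open>x \<in> U\<close>] .
  moreover have "openin X {z \<in> W. f z \<in> T}"
    by (rule homeo_onto_open_preimage[OF \<open>homeo_onto_open X f W\<close> \<open>openin X T\<close>])
  ultimately show ?thesis
    using that assms(4) by blast
qed

lemma homeo_l_incl_hom:
  assumes "openin X U" "openin X V" "U \<subseteq> V"
  shows "restrict id U \<in> hom (homeo_l X) U V"
proof -
  have "homeo_onto_open X (restrict id U) U"
    by (rule homeo_onto_open_cong[OF homeo_onto_open_id[OF assms(1)]]) auto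
  then have "local_homeo X U V (restrict id U)"
    unfolding local_homeo_iff_homeo_onto_open[OF assms(2)] using assms(3) by auto
  with assms show ?thesis
    by (simp add: homeo_l_hom_iff)
qed

lemma homeo_l_compose_hom:
  assumes f: "f \<in> hom (homeo_l X) U V" and g: "g \<in> hom (homeo_l X) V W"
  shows "compose U g f \<in> hom (homeo_l X) U W"
proof -
  have U: "openin X U" and W: "openin X W"
    using f g by (auto simp: homeo_l_hom_iff)
  have "local_homeo X U W (compose U g f)"
    unfolding local_homeo_iff_homeo_onto_open[OF W]
  proof (intro conjI ballI)
    show "compose U g f ` U \<subseteq> W"
      using homeo_l_hom_image[OF f] homeo_l_hom_image[OF g] by (auto simp: compose_def)
    fix x assume x: "x \<in> U"
    obtain W1 where W1: "x \<in> W1" "W1 \<subseteq> U" "homeo_onto_open X f W1"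
      using homeo_l_homE[OF f x] .
    obtain W2 where W2: "f x \<in> W2" "W2 \<subseteq> V" "homeo_onto_open X g W2"
      using homeo_l_homE[OF g] homeo_l_hom_image[OF f] x by blast
    define S where "S = {z \<in> W1. f z \<in> W2}"
    have "openin X S"
      unfolding S_def using homeo_onto_open_preimage[OF W1(3)] W2(3)
      by (simp add: homeo_onto_open_def)
    then have fS: "homeo_onto_open X f S"
      using homeo_onto_open_subset[OF W1(3)] by (auto simp: S_def)
    have "f ` S \<subseteq> W2" "openin X (f ` S)"
      using fS by (auto simp: S_def homeo_onto_open_def)
    then have "homeo_onto_open X g (f ` S)"
      using homeo_onto_open_subset[OF W2(3)] by blast
    with fS have "homeo_onto_open X (g \<circ> f) S"
      by (rule homeo_onto_open_compose)
    then have "homeo_onto_open X (compose U g f) S"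
      by (rule homeo_onto_open_cong) (use W1(2) in \<open>auto simp: S_def compose_def\<close>)
    moreover have "x \<in> S" "S \<subseteq> U"
      using x W1 W2 by (auto simp: S_def)
    ultimately show "\<exists>S. x \<in> S \<and> S \<subseteq> U \<and> homeo_onto_open X (compose U g f) S"
      by blast
  qed
  with U W show ?thesis
    by (simp add: homeo_l_hom_iff compose_def)
qed

lemma homeo_l_local_inverse:
  assumes f: "f \<in> hom (homeo_l X) U V" and "x \<in> U"
  obtains W g where "x \<in> W" "W \<subseteq> U" "openin X W" "openin X (f ` W)"
    "g \<in> hom (homeo_l X) (f ` W) W" "\<And>z. z \<in> W \<Longrightarrow> g (f z) = z" "\<And>w. w \<in> f ` W \<Longrightarrow> f (g w) = w"
proof -
  obtain W where W: "x \<in> W" "W \<subseteq> U" "homeo_onto_open X f W"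
    using homeo_l_homE[OF f \<open>x \<in> U\<close>] .
  obtain g where g: "homeo_onto_open X g (f ` W)" "g ` f ` W = W"
    "\<And>z. z \<in> W \<Longrightarrow> g (f z) = z" "\<And>w. w \<in> f ` W \<Longrightarrow> f (g w) = w"
    using homeo_onto_open_inverse[OF W(3)] by blast
  have oW: "openin X W" and ofW: "openin X (f ` W)"
    using W(3) by (auto simp: homeo_onto_open_def)
  have "homeo_onto_open X (restrict g (f ` W)) (f ` W)"
    by (rule homeo_onto_open_cong[OF g(1)]) auto
  then have "local_homeo X (f ` W) W (restrict g (f ` W))"
    unfolding local_homeo_iff_homeo_onto_open[OF oW] using g(2) by auto
  then have "restrict g (f ` W) \<in> hom (homeo_l X) (f ` W) W"
    using oW ofW by (simp add: homeo_l_hom_iff)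
  then show ?thesis
    using that W(1,2) oW ofW g(3,4) by (metis image_eqI restrict_apply')
qed

lemma cat_over_homeo_l: "cat_over X (homeo_l X)"
  unfolding cat_over_def homeo_l_cmp homeo_l_incl
proof (intro conjI allI impI)
  fix U V f assume "f \<in> hom (homeo_l X) U V"
  then show "openin X U" "openin X V"
    by (auto simp: homeo_l_hom_iff)
next
  fix U V W f g assume "f \<in> hom (homeo_l X) U V" "g \<in> hom (homeo_l X) V W"
  then show "compose U g f \<in> hom (homeo_l X) U W"
    by (rule homeo_l_compose_hom)
next
  fix U V W Z f and g h :: "'a \<Rightarrow> 'a" assume "f \<in> hom (homeo_l X) U V"
  then show "compose U h (compose U g f) = compose U (compose V h g) f"
    using homeo_l_hom_image by (fastforce simp: compose_def fun_eq_iff)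
next
  fix U V f assume f: "f \<in> hom (homeo_l X) U V"
  then have "f \<in> extensional U"
    by (simp add: homeo_l_hom_iff)
  then show "compose U f (restrict id U) = f" "compose U (restrict id V) f = f"
    using homeo_l_hom_image[OF f] by (auto simp: compose_def fun_eq_iff extensional_def)
next
  fix U V assume "openin X U \<and> openin X V \<and> U \<subseteq> V"
  then show "restrict id U \<in> hom (homeo_l X) U V"
    using homeo_l_incl_hom by blast
next
  fix U V W assume "openin X U \<and> openin X V \<and> openin X W \<and> U \<subseteq> V \<and> V \<subseteq> W"
  then show "compose U (restrict id V) (restrict id U) = restrict id U"
    by (auto simp: compose_def fun_eq_iff)
qed

lemma homeo_l_postcompose_incl:
  "f \<in> hom (homeo_l X) U V \<Longrightarrow> compose U (restrict id V) f = f"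
  using Id_compose[of f U V] homeo_l_hom_image[of f X U V] by (auto simp: homeo_l_hom_iff id_def)

lemma eventually_nhdsin_open:
  "openin X S \<Longrightarrow> x \<in> S \<Longrightarrow> (\<And>z. z \<in> S \<Longrightarrow> P z) \<Longrightarrow> \<forall>\<^sub>F z in nhdsin X x. P z"
  by (auto simp: eventually_nhdsin)

lemma eventually_nhdsinE:
  assumes "\<forall>\<^sub>F z in nhdsin X x. P z" "x \<in> topspace X"
  obtains S where "openin X S" "x \<in> S" "\<And>z. z \<in> S \<Longrightarrow> P z"
  using assms by (auto simp: eventually_nhdsin)

lemma eventually_nhdsin_imp_at: "\<forall>\<^sub>F z in nhdsin X x. P z \<Longrightarrow> x \<in> topspace X \<Longrightarrow> P x"
  by (auto elim: eventually_nhdsinE)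

lemma mem_germ_dom [simp]:
  "(U, f) \<in> germ_dom X C x V \<longleftrightarrow> openin X U \<and> x \<in> U \<and> f \<in> hom C U V"
  by (simp add: germ_dom_def)

definition homeo_germ :: "'a topology \<Rightarrow> 'a \<Rightarrow> 'a set \<Rightarrow> ('a \<Rightarrow> 'a) \<Rightarrow> ('a set \<times> ('a \<Rightarrow> 'a)) set" where
  "homeo_germ X x V f =
     {(U, g). (U, g) \<in> germ_dom X (homeo_l X) x V \<and> (\<forall>\<^sub>F z in nhdsin X x. f z = g z)}"

lemma mem_homeo_germ:
  "(U, g) \<in> homeo_germ X x V f \<longleftrightarrow>
     (U, g) \<in> germ_dom X (homeo_l X) x V \<and> (\<forall>\<^sub>F z in nhdsin X x. f z = g z)"
  by (simp add: homeo_germ_def)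

lemma homeo_germ_self: "(U, f) \<in> germ_dom X (homeo_l X) x V \<Longrightarrow> (U, f) \<in> homeo_germ X x V f"
  by (simp add: mem_homeo_germ)

lemma homeo_germ_cong:
  assumes "\<forall>\<^sub>F z in nhdsin X x. f z = g z"
  shows "homeo_germ X x V f = homeo_germ X x V g"
proof -
  have "(\<forall>\<^sub>F z in nhdsin X x. f z = h z) \<longleftrightarrow> (\<forall>\<^sub>F z in nhdsin X x. g z = h z)" for h
    using eventually_elim2[OF assms, of "\<lambda>z. f z = h z" "\<lambda>z. g z = h z"]
      eventually_elim2[OF assms, of "\<lambda>z. g z = h z" "\<lambda>z. f z = h z"] by auto
  then show ?thesis
    by (simp add: homeo_germ_def)
qed

lemma germ_rel_homeo_l_iff:
  "((U, f), (U', f')) \<in> germ_rel X (homeo_l X) x V \<longleftrightarrow>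
     (U, f) \<in> germ_dom X (homeo_l X) x V \<and> (U', f') \<in> germ_dom X (homeo_l X) x V \<and>
     (\<forall>\<^sub>F z in nhdsin X x. f z = f' z)"
proof -
  have "(\<exists>W. openin X W \<and> x \<in> W \<and> W \<subseteq> U \<inter> U' \<and> restrict f W = restrict f' W) \<longleftrightarrow>
        (\<forall>\<^sub>F z in nhdsin X x. f z = f' z)"
    if "openin X U" "x \<in> U" "openin X U'" "x \<in> U'"
  proof
    assume "\<exists>W. openin X W \<and> x \<in> W \<and> W \<subseteq> U \<inter> U' \<and> restrict f W = restrict f' W"
    then obtain W where "openin X W" "x \<in> W" "\<And>z. z \<in> W \<Longrightarrow> f z = f' z"
      by (metis restrict_apply')
    then show "\<forall>\<^sub>F z in nhdsin X x. f z = f' z"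
      by (rule eventually_nhdsin_open)
  next
    assume "\<forall>\<^sub>F z in nhdsin X x. f z = f' z"
    moreover have "x \<in> topspace X"
      using that openin_subset by blast
    ultimately obtain S where "openin X S" "x \<in> S" "\<And>z. z \<in> S \<Longrightarrow> f z = f' z"
      by (rule eventually_nhdsinE) blast
    with that show "\<exists>W. openin X W \<and> x \<in> W \<and> W \<subseteq> U \<inter> U' \<and> restrict f W = restrict f' W"
      by (intro exI[of _ "S \<inter> U \<inter> U'"]) (auto simp: fun_eq_iff)
  qed
  then show ?thesis
    unfolding germ_rel_def homeo_l_cmp homeo_l_incl compose_restrict_id by auto
qed

lemma germ_homeo_l:
  "(U, f) \<in> germ_dom X (homeo_l X) x V \<Longrightarrow> germ X (homeo_l X) x V U f = homeo_germ X x V f"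
proof (rule set_eqI)
  fix p :: "'a set \<times> ('a \<Rightarrow> 'a)"
  assume "(U, f) \<in> germ_dom X (homeo_l X) x V"
  then show "p \<in> germ X (homeo_l X) x V U f \<longleftrightarrow> p \<in> homeo_germ X x V f"
    by (cases p) (simp add: germ_def mem_homeo_germ germ_rel_homeo_l_iff del: mem_germ_dom)
qed

lemma stalk_homeo_l_iff:
  "c \<in> stalk X (homeo_l X) x V \<longleftrightarrow>
     (\<exists>U f. (U, f) \<in> germ_dom X (homeo_l X) x V \<and> c = homeo_germ X x V f)"
proof -
  have "c \<in> stalk X (homeo_l X) x V \<longleftrightarrow>
        (\<exists>U f. (U, f) \<in> germ_dom X (homeo_l X) x V \<and> c = germ X (homeo_l X) x V U f)"
    by (simp add: stalk_def quotient_def germ_def Bex_def del: mem_germ_dom)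
  then show ?thesis
    by (metis germ_homeo_l)
qed

lemma stalk_homeo_lE:
  assumes "c \<in> stalk X (homeo_l X) x V"
  obtains U f where "(U, f) \<in> c" "(U, f) \<in> germ_dom X (homeo_l X) x V" "c = homeo_germ X x V f"
  using assms homeo_germ_self unfolding stalk_homeo_l_iff by metis

lemma homeo_germ_nonempty:
  assumes f: "(U, f) \<in> germ_dom X (homeo_l X) x V" and "openin X V'" "f x \<in> V'"
  obtains U' f' where "(U', f') \<in> homeo_germ X x V' f"
proof -
  obtain D where D: "openin X D" "x \<in> D" "D \<subseteq> U" "f ` D \<subseteq> V'"
    using homeo_l_hom_continuous[of f X U V x V'] f assms(2,3) by auto
  then have "restrict f D \<in> hom (homeo_l X) D V'"
    using homeo_l_hom_restrict[of f X U V D V'] f assms(2) by auto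
  moreover have "\<forall>\<^sub>F z in nhdsin X x. f z = restrict f D z"
    using D by (auto intro: eventually_nhdsin_open)
  ultimately show ?thesis
    using that[of D "restrict f D"] D by (simp add: mem_homeo_germ)
qed

lemma homeo_germ_in_stalk:
  assumes "(U, f) \<in> germ_dom X (homeo_l X) x V" "openin X V'" "f x \<in> V'"
  shows "homeo_germ X x V' f \<in> stalk X (homeo_l X) x V'"
proof -
  obtain U' f' where "(U', f') \<in> homeo_germ X x V' f"
    using homeo_germ_nonempty[OF assms] .
  then have "(U', f') \<in> germ_dom X (homeo_l X) x V'" "\<forall>\<^sub>F z in nhdsin X x. f z = f' z"
    by (simp_all add: mem_homeo_germ del: mem_germ_dom)
  moreover from this(2) have "homeo_germ X x V' f = homeo_germ X x V' f'"
    by (rule homeo_germ_cong)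
  ultimately show ?thesis
    unfolding stalk_homeo_l_iff by blast
qed

lemma germ_homeo_l_enlarge:
  assumes "(U, f) \<in> germ_dom X (homeo_l X) x V" "V \<subseteq> V'" "openin X V'"
  shows "germ X (homeo_l X) x V' U (compose U (restrict id V) f) = homeo_germ X x V' f"
proof -
  have "f \<in> hom (homeo_l X) U V'"
    using assms homeo_l_hom_enlarge by auto
  with assms show ?thesis
    using germ_homeo_l[of U f X x V'] homeo_l_postcompose_incl[of f X U V] by simp
qed

lemma Cxy_in_stalk: "\<phi> \<in> Cxy X C x y \<Longrightarrow> V \<in> nbhds X y \<Longrightarrow> \<phi> V \<in> stalk X C x V"
  by (auto simp: Cxy_def)

definition homeo_germ_family :: "'a topology \<Rightarrow> 'a \<Rightarrow> ('a \<Rightarrow> 'a) \<Rightarrow> 'a set \<Rightarrow> ('a set \<times> ('a \<Rightarrow> 'a)) set" where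
  "homeo_germ_family X x f = (\<lambda>V\<in>nbhds X (f x). homeo_germ X x V f)"

lemma homeo_germ_family_in_Cxy:
  assumes f: "(U, f) \<in> germ_dom X (homeo_l X) x V"
  shows "homeo_germ_family X x f \<in> Cxy X (homeo_l X) x (f x)"
  unfolding Cxy_def homeo_l_cmp homeo_l_incl
proof (intro CollectI conjI allI impI ballI)
  show "homeo_germ_family X x f \<in> (\<Pi>\<^sub>E V\<in>nbhds X (f x). stalk X (homeo_l X) x V)"
    using homeo_germ_in_stalk[OF f] by (auto simp: homeo_germ_family_def nbhds_def)
next
  fix V1 V2 p
  assume V: "V1 \<in> nbhds X (f x) \<and> V2 \<in> nbhds X (f x) \<and> V1 \<subseteq> V2"
    and p: "p \<in> homeo_germ_family X x f V1"
  obtain U1 f1 where p_eq: "p = (U1, f1)"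
    by (cases p)
  with p V have f1: "(U1, f1) \<in> germ_dom X (homeo_l X) x V1" "\<forall>\<^sub>F z in nhdsin X x. f z = f1 z"
    by (simp_all add: homeo_germ_family_def mem_homeo_germ del: mem_germ_dom)
  have "germ X (homeo_l X) x V2 U1 (compose U1 (restrict id V1) f1) = homeo_germ X x V2 f1"
    using germ_homeo_l_enlarge[OF f1(1)] V by (simp add: nbhds_def)
  also have "\<dots> = homeo_germ_family X x f V2"
    using homeo_germ_cong[OF f1(2)] V by (simp add: homeo_germ_family_def)
  finally show "case p of (U, g) \<Rightarrow>
      germ X (homeo_l X) x V2 U (compose U (restrict id V1) g) = homeo_germ_family X x f V2"
    by (simp add: p_eq)
qed

lemma Cxy_homeo_l_component:
  assumes \<phi>: "\<phi> \<in> Cxy X (homeo_l X) x y" and V: "V \<in> nbhds X y" "V' \<in> nbhds X y"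
    and p: "(U, f) \<in> \<phi> V"
  shows "f x \<in> V'" "\<phi> V' = homeo_germ X x V' f"
proof -
  have transition: "germ X (homeo_l X) x W2 U (compose U (restrict id W1) g) = \<phi> W2"
    if "W1 \<in> nbhds X y" "W2 \<in> nbhds X y" "W1 \<subseteq> W2" "(U, g) \<in> \<phi> W1" for W1 W2 U g
    using \<phi> that unfolding Cxy_def homeo_l_cmp homeo_l_incl by fast
  define S where "S = V \<inter> V'"
  have S: "S \<in> nbhds X y"
    using V by (auto simp: nbhds_def S_def)
  obtain U'' f'' where "(U'', f'') \<in> \<phi> S" and f'': "(U'', f'') \<in> germ_dom X (homeo_l X) x S"
    using Cxy_in_stalk[OF \<phi> S] by (rule stalk_homeo_lE)
  have \<phi>_eq: "\<phi> W = homeo_germ X x W f''" if "W \<in> nbhds X y" "S \<subseteq> W" for W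
    using transition[OF S that \<open>(U'', f'') \<in> \<phi> S\<close>] germ_homeo_l_enlarge[OF f'' that(2)] that(1)
    by (simp add: nbhds_def)
  have "(U, f) \<in> homeo_germ X x V f''"
    using \<phi>_eq[OF V(1)] p by (simp add: S_def)
  then have ev: "\<forall>\<^sub>F z in nhdsin X x. f'' z = f z"
    by (simp add: mem_homeo_germ del: mem_germ_dom)
  have "x \<in> topspace X"
    using f'' openin_subset by auto
  then have "f x = f'' x"
    using eventually_nhdsin_imp_at[OF ev] by simp
  also have "f'' x \<in> S"
    using f'' homeo_l_hom_image by fastforce
  finally show "f x \<in> V'"
    by (simp add: S_def)
  show "\<phi> V' = homeo_germ X x V' f"
    using \<phi>_eq[OF V(2)] homeo_germ_cong[OF ev] by (simp add: S_def)
qed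

lemma Cxy_homeo_l_eq_family:
  assumes T1: "t1_space X" and \<phi>: "\<phi> \<in> Cxy X (homeo_l X) x y" and V: "V \<in> nbhds X y"
    and p: "(U, f) \<in> \<phi> V"
  shows "f x = y" "\<phi> = homeo_germ_family X x f"
proof -
  have "y \<in> topspace X" "f x \<in> topspace X"
    using V Cxy_homeo_l_component(1)[OF \<phi> V V p] openin_subset by (auto simp: nbhds_def)
  show fx: "f x = y"
  proof (rule ccontr)
    assume "f x \<noteq> y"
    then obtain W where "openin X W" "y \<in> W" "f x \<notin> W"
      using T1 \<open>y \<in> topspace X\<close> \<open>f x \<in> topspace X\<close> unfolding t1_space_def by metis
    then show False
      using Cxy_homeo_l_component(1)[OF \<phi> V _ p, of W] by (simp add: nbhds_def)
  qed
  show "\<phi> = homeo_germ_family X x f"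
  proof (rule ext)
    fix W
    show "\<phi> W = homeo_germ_family X x f W"
    proof (cases "W \<in> nbhds X y")
      case True
      then show ?thesis
        using Cxy_homeo_l_component(2)[OF \<phi> V True p] fx by (simp add: homeo_germ_family_def)
    next
      case False
      then show ?thesis
        using \<phi> fx by (simp add: Cxy_def homeo_germ_family_def PiE_def extensional_def)
    qed
  qed
qed

lemma bij_betw_Cxy_stalk_homeo_l:
  assumes T1: "t1_space X" and V: "openin X V"
  shows "bij_betw (\<lambda>(y, \<phi>). \<phi> V) (SIGMA y:V. Cxy X (homeo_l X) x y) (stalk X (homeo_l X) x V)"
proof (rule bij_betwI')
  fix a b
  assume "a \<in> (SIGMA y:V. Cxy X (homeo_l X) x y)" "b \<in> (SIGMA y:V. Cxy X (homeo_l X) x y)"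
  then obtain y \<phi> y' \<phi>' where ab: "a = (y, \<phi>)" "b = (y', \<phi>')"
    and \<phi>: "\<phi> \<in> Cxy X (homeo_l X) x y" "\<phi>' \<in> Cxy X (homeo_l X) x y'"
    and V_nbhd: "V \<in> nbhds X y" "V \<in> nbhds X y'"
    using V by (auto simp: nbhds_def)
  show "((\<lambda>(y, \<phi>). \<phi> V) a = (\<lambda>(y, \<phi>). \<phi> V) b) \<longleftrightarrow> a = b"
  proof
    assume same: "(\<lambda>(y, \<phi>). \<phi> V) a = (\<lambda>(y, \<phi>). \<phi> V) b"
    obtain U f where "(U, f) \<in> \<phi> V"
      using Cxy_in_stalk[OF \<phi>(1) V_nbhd(1)] by (rule stalk_homeo_lE)
    moreover from this have "(U, f) \<in> \<phi>' V"
      using same ab by simp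
    ultimately show "a = b"
      using Cxy_homeo_l_eq_family[OF T1 \<phi>(1) V_nbhd(1)] Cxy_homeo_l_eq_family[OF T1 \<phi>(2) V_nbhd(2)] ab
      by metis
  qed simp
next
  fix a
  assume "a \<in> (SIGMA y:V. Cxy X (homeo_l X) x y)"
  then show "(\<lambda>(y, \<phi>). \<phi> V) a \<in> stalk X (homeo_l X) x V"
    using V by (auto intro!: Cxy_in_stalk simp: nbhds_def)
next
  fix c
  assume "c \<in> stalk X (homeo_l X) x V"
  then obtain U f where f: "(U, f) \<in> germ_dom X (homeo_l X) x V" and c: "c = homeo_germ X x V f"
    unfolding stalk_homeo_l_iff by blast
  have "f x \<in> V"
    using f homeo_l_hom_image by fastforce
  with V c have "c = homeo_germ_family X x f V"
    by (simp add: homeo_germ_family_def nbhds_def)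
  with \<open>f x \<in> V\<close> homeo_germ_family_in_Cxy[OF f]
  show "\<exists>a\<in>(SIGMA y:V. Cxy X (homeo_l X) x y). c = (\<lambda>(y, \<phi>). \<phi> V) a"
    by blast
qed

lemma germ_homeo_l_compose:
  assumes g: "(V, g') \<in> homeo_germ X (f x) W g" and f: "(U, f') \<in> homeo_germ X x V f"
  shows "germ X (homeo_l X) x W U (compose U g' f') = homeo_germ X x W (g \<circ> f)"
proof -
  have U: "openin X U" "x \<in> U" and f': "f' \<in> hom (homeo_l X) U V"
    and ev_f: "\<forall>\<^sub>F z in nhdsin X x. f z = f' z"
    using f by (auto simp: mem_homeo_germ)
  have g': "g' \<in> hom (homeo_l X) V W" and ev_g: "\<forall>\<^sub>F z in nhdsin X (f x). g z = g' z"
    using g by (auto simp: mem_homeo_germ)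
  have "x \<in> topspace X"
    using U openin_subset by auto
  then have f'x: "f' x = f x"
    using eventually_nhdsin_imp_at[OF ev_f] by simp
  moreover have "f' x \<in> topspace X"
    using homeo_l_hom_image[OF f'] U(2) openin_subset g' by (fastforce simp: homeo_l_hom_iff)
  ultimately obtain A where A: "openin X A" "f x \<in> A" "\<And>z. z \<in> A \<Longrightarrow> g z = g' z"
    using ev_g by (auto elim: eventually_nhdsinE)
  obtain D where D: "openin X D" "x \<in> D" "D \<subseteq> U" "f' ` D \<subseteq> A"
    using homeo_l_hom_continuous[OF f' U(2) A(1)] f'x A(2) by metis
  have "\<forall>\<^sub>F z in nhdsin X x. z \<in> D"
    using D by (auto intro: eventually_nhdsin_open)
  with ev_f have "\<forall>\<^sub>F z in nhdsin X x. (g \<circ> f) z = compose U g' f' z"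
    by eventually_elim (use D A in \<open>auto simp: compose_def\<close>)
  then have "homeo_germ X x W (g \<circ> f) = homeo_germ X x W (compose U g' f')"
    by (rule homeo_germ_cong)
  moreover have "compose U g' f' \<in> hom (homeo_l X) U W"
    by (rule homeo_l_compose_hom[OF f' g'])
  ultimately show ?thesis
    using germ_homeo_l[of U "compose U g' f'" X x W] U by simp
qed

lemma star_comp_homeo_germ_family:
  assumes f: "(U, f) \<in> germ_dom X (homeo_l X) x V" and g: "(U', g) \<in> germ_dom X (homeo_l X) (f x) V'"
  shows "star_comp X (homeo_l X) x (f x) (g (f x)) (homeo_germ_family X (f x) g) (homeo_germ_family X x f) =
    homeo_germ_family X x (g \<circ> f)"
proof (rule ext)
  fix W
  show "star_comp X (homeo_l X) x (f x) (g (f x)) (homeo_germ_family X (f x) g) (homeo_germ_family X x f) W =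
      homeo_germ_family X x (g \<circ> f) W"
  proof (cases "W \<in> nbhds X (g (f x))")
    case False
    then show ?thesis
      by (simp add: star_comp_def homeo_germ_family_def)
  next
    case True
    then have W: "openin X W" "g (f x) \<in> W"
      by (simp_all add: nbhds_def)
    define P where "P c \<longleftrightarrow> (\<exists>V1 g1 U1 f1. V1 \<in> nbhds X (f x) \<and>
        (V1, g1) \<in> homeo_germ_family X (f x) g W \<and> (U1, f1) \<in> homeo_germ_family X x f V1 \<and>
        c = germ X (homeo_l X) x W U1 (cmp (homeo_l X) U1 V1 W g1 f1))" for c
    have "\<exists>c. P c"
    proof -
      obtain V1 g1 where g1: "(V1, g1) \<in> homeo_germ X (f x) W g"
        using homeo_germ_nonempty[OF g W] .
      then have V1: "V1 \<in> nbhds X (f x)"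
        by (auto simp: mem_homeo_germ nbhds_def)
      then obtain U1 f1 where "(U1, f1) \<in> homeo_germ X x V1 f"
        using homeo_germ_nonempty[OF f] by (auto simp: nbhds_def)
      with V1 g1 True have "P (germ X (homeo_l X) x W U1 (cmp (homeo_l X) U1 V1 W g1 f1))"
        unfolding P_def homeo_germ_family_def
        by (intro exI[of _ V1] exI[of _ g1] exI[of _ U1] exI[of _ f1]) simp
      then show ?thesis ..
    qed
    moreover have "c = homeo_germ X x W (g \<circ> f)" if Pc: "P c" for c
    proof -
      obtain V1 g1 U1 f1 where "(V1, g1) \<in> homeo_germ X (f x) W g" "(U1, f1) \<in> homeo_germ X x V1 f"
        and "c = germ X (homeo_l X) x W U1 (compose U1 g1 f1)"
        using Pc True unfolding P_def homeo_germ_family_def by auto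
      then show ?thesis
        by (simp add: germ_homeo_l_compose)
    qed
    ultimately have "Eps P = homeo_germ X x W (g \<circ> f)"
      by (rule someI2_ex)
    with True show ?thesis
      by (simp add: star_comp_def homeo_germ_family_def P_def[abs_def])
  qed
qed

lemma star_id_homeo_l: "star_id X (homeo_l X) x = homeo_germ_family X x id"
proof (rule ext)
  fix V
  show "star_id X (homeo_l X) x V = homeo_germ_family X x id V"
  proof (cases "V \<in> nbhds X x")
    case True
    then have V: "openin X V" "x \<in> V"
      by (simp_all add: nbhds_def)
    then have "restrict id V \<in> hom (homeo_l X) V V"
      by (simp add: homeo_l_incl_hom)
    with V have "germ X (homeo_l X) x V V (restrict id V) = homeo_germ X x V (restrict id V)"
      by (simp add: germ_homeo_l)
    also have "\<dots> = homeo_germ X x V id"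
      by (rule homeo_germ_cong) (use V in \<open>auto intro: eventually_nhdsin_open\<close>)
    finally show ?thesis
      using True by (simp add: star_id_def homeo_germ_family_def)
  qed (simp add: star_id_def homeo_germ_family_def)
qed

lemma homeo_germ_family_cong:
  assumes "x \<in> topspace X" "\<forall>\<^sub>F z in nhdsin X x. f z = g z"
  shows "homeo_germ_family X x f = homeo_germ_family X x g"
  using eventually_nhdsin_imp_at[OF assms(2,1)] homeo_germ_cong[OF assms(2)]
  by (simp add: homeo_germ_family_def)

lemma Cxy_homeo_l_invertible:
  assumes T1: "t1_space X" and y: "y \<in> topspace X" and \<phi>: "\<phi> \<in> Cxy X (homeo_l X) x y"
  shows "\<exists>\<psi>\<in>Cxy X (homeo_l X) y x.
    star_comp X (homeo_l X) x y x \<psi> \<phi> = star_id X (homeo_l X) x \<and>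
    star_comp X (homeo_l X) y x y \<phi> \<psi> = star_id X (homeo_l X) y"
proof -
  have top: "topspace X \<in> nbhds X y"
    using y by (simp add: nbhds_def)
  obtain U f where "(U, f) \<in> \<phi> (topspace X)" and f: "(U, f) \<in> germ_dom X (homeo_l X) x (topspace X)"
    using Cxy_in_stalk[OF \<phi> top] by (rule stalk_homeo_lE)
  then have fx: "f x = y" and \<phi>_eq: "\<phi> = homeo_germ_family X x f"
    using Cxy_homeo_l_eq_family[OF T1 \<phi> top] by auto
  obtain W g where W: "x \<in> W" "openin X W" "openin X (f ` W)"
    and g: "g \<in> hom (homeo_l X) (f ` W) W"
    and gf: "\<And>z. z \<in> W \<Longrightarrow> g (f z) = z" and fg: "\<And>w. w \<in> f ` W \<Longrightarrow> f (g w) = w"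
    using f by (auto elim!: homeo_l_local_inverse[of f X U "topspace X" x])
  have g_dom: "(f ` W, g) \<in> germ_dom X (homeo_l X) (f x) W"
    using W g by simp
  have gfx: "g (f x) = x"
    using gf W(1) by simp
  have x: "x \<in> topspace X" and "f x \<in> topspace X"
    using W openin_subset by auto
  define \<psi> where "\<psi> = homeo_germ_family X (f x) g"
  have "\<psi> \<in> Cxy X (homeo_l X) y x"
    using homeo_germ_family_in_Cxy[OF g_dom] gfx fx by (simp add: \<psi>_def)
  moreover have "star_comp X (homeo_l X) x y x \<psi> \<phi> = star_id X (homeo_l X) x"
  proof -
    have "star_comp X (homeo_l X) x y x \<psi> \<phi> = homeo_germ_family X x (g \<circ> f)"
      using star_comp_homeo_germ_family[OF f g_dom] gfx fx by (simp add: \<psi>_def \<phi>_eq)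
    also have "\<dots> = homeo_germ_family X x id"
      by (rule homeo_germ_family_cong[OF x]) (use W gf in \<open>auto intro: eventually_nhdsin_open\<close>)
    finally show ?thesis
      by (simp add: star_id_homeo_l)
  qed
  moreover have "star_comp X (homeo_l X) y x y \<phi> \<psi> = star_id X (homeo_l X) y"
  proof -
    have "(U, f) \<in> germ_dom X (homeo_l X) (g (f x)) (topspace X)"
      using f gfx by simp
    from star_comp_homeo_germ_family[OF g_dom this]
    have "star_comp X (homeo_l X) y x y \<phi> \<psi> = homeo_germ_family X (f x) (f \<circ> g)"
      using gfx fx by (simp add: \<psi>_def \<phi>_eq)
    also have "\<dots> = homeo_germ_family X (f x) id"
      by (rule homeo_germ_family_cong[OF \<open>f x \<in> topspace X\<close>])
         (use W fg in \<open>auto intro: eventually_nhdsin_open\<close>)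
    finally show ?thesis
      by (simp add: star_id_homeo_l fx)
  qed
  ultimately show ?thesis
    by blast
qed

lemma hom_sheaves_homeo_l: "hom_sheaves X (homeo_l X)"
  unfolding hom_sheaves_def homeo_l_cmp homeo_l_incl compose_restrict_id
proof (intro allI impI)
  fix V U \<U> s
  assume "openin X V \<and> openin X U \<and> (\<forall>W\<in>\<U>. openin X W) \<and> \<Union>\<U> = U \<and>
    (\<forall>W\<in>\<U>. s W \<in> hom (homeo_l X) W V) \<and>
    (\<forall>W\<in>\<U>. \<forall>W'\<in>\<U>. restrict (s W) (W \<inter> W') = restrict (s W') (W \<inter> W'))"
  then have V: "openin X V" and U: "openin X U" and cover: "\<Union>\<U> = U"
    and s: "\<And>W. W \<in> \<U> \<Longrightarrow> s W \<in> hom (homeo_l X) W V"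
    and compatible: "\<And>W W'. W \<in> \<U> \<Longrightarrow> W' \<in> \<U> \<Longrightarrow> restrict (s W) (W \<inter> W') = restrict (s W') (W \<inter> W')"
    by auto
  have s_agree: "s W z = s W' z" if "W \<in> \<U>" "W' \<in> \<U>" "z \<in> W" "z \<in> W'" for W W' z
    using fun_cong[OF compatible[OF that(1,2)], of z] that(3,4) by simp
  define f where "f = (\<lambda>z\<in>U. s (SOME W. W \<in> \<U> \<and> z \<in> W) z)"
  have f_restrict: "restrict f W = s W" if "W \<in> \<U>" for W
  proof (rule extensionalityI)
    show "s W \<in> extensional W"
      using s[OF that] by (simp add: homeo_l_hom_iff)
    fix z assume "z \<in> W"
    define W' where "W' = (SOME W. W \<in> \<U> \<and> z \<in> W)"
    have "\<exists>W. W \<in> \<U> \<and> z \<in> W"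
      using that \<open>z \<in> W\<close> by blast
    then have "W' \<in> \<U> \<and> z \<in> W'"
      unfolding W'_def by (rule someI_ex)
    moreover have "z \<in> U"
      using that \<open>z \<in> W\<close> cover by blast
    ultimately show "restrict f W z = s W z"
      using s_agree[of W' W z] that \<open>z \<in> W\<close> by (simp add: f_def flip: W'_def)
  qed simp
  have "f \<in> hom (homeo_l X) U V"
  proof (rule homeo_l_hom_glue[OF U V _ cover])
    show "f \<in> extensional U"
      by (simp add: f_def)
    fix W assume "W \<in> \<U>"
    then show "restrict f W \<in> hom (homeo_l X) W V"
      using s f_restrict by simp
  qed
  moreover have "g = f" if "g \<in> hom (homeo_l X) U V" "\<forall>W\<in>\<U>. restrict g W = s W" for g
  proof (rule extensionalityI)
    show "g \<in> extensional U" "f \<in> extensional U"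
      using that(1) by (simp_all add: homeo_l_hom_iff f_def)
    fix z assume "z \<in> U"
    then obtain W where "W \<in> \<U>" "z \<in> W"
      using cover by blast
    then show "g z = f z"
      using that(2) f_restrict by (metis restrict_apply')
  qed
  ultimately show "\<exists>!f. f \<in> hom (homeo_l X) U V \<and> (\<forall>W\<in>\<U>. restrict f W = s W)"
    using f_restrict by blast
qed

theorem mainTheorem2:
  fixes X :: "'a topology"
  assumes "t1_space X"
  shows "pseudogroup_sheaf X (homeo_l X)"
  unfolding pseudogroup_sheaf_def pre_pseudogroup_def
  using assms cat_over_homeo_l bij_betw_Cxy_stalk_homeo_l[OF assms]
    Cxy_homeo_l_invertible[OF assms] hom_sheaves_homeo_l
  by blast

end
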